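(* Fix $\varepsilon>0$, $\beta\in(0,1)$, an even integer $d>4(e^{2\varepsilon}-1)^2\ln\frac{2}{\beta}$, and an $\varepsilon$-private randomizer $R:[d]\to\mathcal Y$. For every message $y\in\mathcal Y$, if $H$ is chosen uniformly at random among subsets of $[d]$ of size $d/2$, then \[ \Pr_H\left[y \text{ is not } (e^{2\varepsilon}-1)\sqrt{\tfrac{4}{d}\ln\tfrac{2}{\beta}}\text{-leaky with respect to } H,R\right]\ge 1-\beta . \]
   Context: A randomizer $R:[d]\to\mathcal Y$ is a randomized map into a countable message set $\mathcal Y$; it is $\varepsilon$-private if for all $x,x'\in[d]$ and all $Y\subseteq\mathcal Y$, $\Pr[R(x)\in Y]\le e^{\varepsilon}\Pr[R(x')\in Y]$. $\mathbf U$ is the uniform distribution on $[d]$; for $H\subseteq[d]$, $\mathbf U_H$ is the uniform distribution on $H$; $R(\mathbf U)$ (resp. $R(\mathbf U_H)$) is the distribution of $R(\hat x)$ where $\hat x\sim\mathbf U$ (resp. $\hat x\sim \mathbf U_H$). For $H\subset[d]$ with $|H|=d/2$, a message $y$ is $v$-leaky with respect to $H,R$ if $\left|\ln\frac{\Pr[R(\mathbf U_H)=y]}{\Pr[R(\mathbf U)=y]}\right|>v$ (messages with $\Pr[R(\mathbf U)=y]=0$ are regarded as not leaky). *)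

theory Defs
  imports "HOL-Probability.Probability"
begin

text \<open>A randomizer on [d] = {1..d} is modelled as a map from inputs to
  probability mass functions on a countable message type 'y.\<close>

definition eps_private :: "real \<Rightarrow> nat \<Rightarrow> (nat \<Rightarrow> 'y::countable pmf) \<Rightarrow> bool" where
  "eps_private \<epsilon> d R \<longleftrightarrow>
     (\<forall>x\<in>{1..d}. \<forall>x'\<in>{1..d}. \<forall>Y. measure_pmf.prob (R x) Y \<le> exp \<epsilon> * measure_pmf.prob (R x') Y)"

text \<open>Pr[R(U_H) = y] where U_H is uniform on H (R(U) is the case H = [d]).\<close>
definition prob_out :: "(nat \<Rightarrow> 'y pmf) \<Rightarrow> nat set \<Rightarrow> 'y \<Rightarrow> real" where
  "prob_out R H y = measure_pmf.prob (bind_pmf (pmf_of_set H) R) {y}"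

text \<open>y is v-leaky w.r.t. H, R. Messages with Pr[R(U)=y]=0 are not leaky;
  if Pr[R(U_H)=y]=0 < Pr[R(U)=y] the log-ratio is -infinity, hence leaky.\<close>
definition leaky :: "real \<Rightarrow> nat \<Rightarrow> nat set \<Rightarrow> (nat \<Rightarrow> 'y pmf) \<Rightarrow> 'y \<Rightarrow> bool" where
  "leaky v d H R y \<longleftrightarrow>
     prob_out R {1..d} y > 0 \<and>
     (prob_out R H y = 0 \<or> \<bar>ln (prob_out R H y / prob_out R {1..d} y)\<bar> > v)"

end

theory Submission
  imports Defs
begin

text \<open>Fix the message \<open>y\<close> and write \<open>p x = Pr[R(x) = y]\<close>. Privacy confines every \<open>p x\<close>
  to \<open>[P / exp \<epsilon>, exp \<epsilon> * P]\<close>, where \<open>P\<close> is the average of \<open>p\<close> over \<open>[d]\<close>, so any two values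
  of \<open>p\<close> differ by at most \<open>(exp (2 * \<epsilon>) - 1) * P\<close>. Since \<open>Pr[R(U\<^sub>H) = y]\<close> is the average of \<open>p\<close>
  over \<open>H\<close>, the message can only be leaky if the sum of \<open>p\<close> over the random half \<open>H\<close>
  deviates from its mean by a constant fraction of it. That is excluded by a Hoeffding bound
  for sampling half of the elements without replacement: a uniform half of \<open>{1..2n}\<close> is the
  image under a uniform random permutation of a set that picks one element of each pair
  \<open>{2i+1, 2i+2}\<close> independently, and for a fixed permutation the moment generating function
  factorises into two-point terms bounded by Hoeffding's lemma.\<close>

lemma exp_add_exp_le:
  fixes t u w c :: real
  assumes "t \<ge> 0" and "\<bar>u - w\<bar> \<le> c"
  shows "exp (t * u) + exp (t * w) \<le> 2 * exp (t * (u + w) / 2 + t\<^sup>2 * c\<^sup>2 / 8)"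
proof -
  have key: "exp (t * u) + exp (t * w) \<le> 2 * exp (t * (u + w) / 2 + t\<^sup>2 * c\<^sup>2 / 8)"
    if le: "w \<le> u" and uw: "u - w \<le> c" for u w
  proof -
    define h where "h = t * (u - w)"
    have "h \<ge> 0" and "h \<le> t * c"
      using assms(1) le uw by (simp_all add: h_def mult_left_mono)
    from \<open>h \<ge> 0\<close> have "- h * (1/2) + ln (1 + (1/2) * (exp h - 1)) \<le> h\<^sup>2 / 8"
      by (rule Hoeffdings_lemma_aux) simp
    then have "ln ((1 + exp h) / 2) \<le> h / 2 + h\<^sup>2 / 8"
      by (simp add: field_simps)
    then have "(1 + exp h) / 2 \<le> exp (h / 2 + h\<^sup>2 / 8)"
      by (metis add_pos_pos exp_gt_zero exp_le_cancel_iff exp_ln half_gt_zero zero_less_one)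
    also have "\<dots> \<le> exp (h / 2 + t\<^sup>2 * c\<^sup>2 / 8)"
      using power_mono[OF \<open>h \<le> t * c\<close> \<open>h \<ge> 0\<close>, of 2] by (simp add: power_mult_distrib)
    finally have pair: "1 + exp h \<le> 2 * exp (h / 2 + t\<^sup>2 * c\<^sup>2 / 8)"
      by simp
    have "exp (t * u) + exp (t * w) = exp (t * w) * (1 + exp h)"
      by (simp add: h_def algebra_simps flip: exp_add)
    also have "\<dots> \<le> exp (t * w) * (2 * exp (h / 2 + t\<^sup>2 * c\<^sup>2 / 8))"
      using pair by simp
    also have "\<dots> = 2 * exp (t * (u + w) / 2 + t\<^sup>2 * c\<^sup>2 / 8)"
      by (simp add: h_def field_simps flip: exp_add)
    finally show ?thesis .
  qed
  show ?thesis
    using key[of w u] key[of u w] assms(2) by (cases "w \<le> u") (auto simp: add.commute)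
qed

lemma sum_Pow_exp_choice_le:
  fixes u w :: "'a \<Rightarrow> real" and t c :: real
  assumes "finite I" and "t \<ge> 0" and "\<And>i. i \<in> I \<Longrightarrow> \<bar>u i - w i\<bar> \<le> c"
  shows "(\<Sum>C\<in>Pow I. exp (t * ((\<Sum>i\<in>C. u i) + (\<Sum>i\<in>I - C. w i))))
         \<le> 2 ^ card I * exp (t * (\<Sum>i\<in>I. u i + w i) / 2 + card I * t\<^sup>2 * c\<^sup>2 / 8)"
proof -
  have "(\<Sum>C\<in>Pow I. exp (t * ((\<Sum>i\<in>C. u i) + (\<Sum>i\<in>I - C. w i))))
      = (\<Sum>C\<in>Pow I. (\<Prod>i\<in>C. exp (t * u i)) * (\<Prod>i\<in>I - C. exp (t * w i)))"
  proof (rule sum.cong)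
    fix C assume "C \<in> Pow I"
    then have "finite C" using assms(1) finite_subset by auto
    then show "exp (t * ((\<Sum>i\<in>C. u i) + (\<Sum>i\<in>I - C. w i)))
        = (\<Prod>i\<in>C. exp (t * u i)) * (\<Prod>i\<in>I - C. exp (t * w i))"
      using assms(1) by (simp add: distrib_left sum_distrib_left exp_add exp_sum)
  qed simp
  also have "\<dots> = (\<Prod>i\<in>I. exp (t * u i) + exp (t * w i))"
    using assms(1) by (rule prod_add[symmetric])
  also have "\<dots> \<le> (\<Prod>i\<in>I. 2 * exp (t * (u i + w i) / 2 + t\<^sup>2 * c\<^sup>2 / 8))"
    using exp_add_exp_le assms(2,3) by (intro prod_mono) (auto intro: add_nonneg_nonneg)
  also have "\<dots> = 2 ^ card I * exp (\<Sum>i\<in>I. t * (u i + w i) / 2 + t\<^sup>2 * c\<^sup>2 / 8)"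
    using assms(1) by (simp add: prod.distrib exp_sum)
  also have "(\<Sum>i\<in>I. t * (u i + w i) / 2 + t\<^sup>2 * c\<^sup>2 / 8)
      = t * (\<Sum>i\<in>I. u i + w i) / 2 + card I * t\<^sup>2 * c\<^sup>2 / 8"
    by (simp add: sum.distrib sum_distrib_left sum_divide_distrib[symmetric] distrib_left add_divide_distrib)
  finally show ?thesis .
qed

lemma exists_permutes_image_eq:
  assumes "finite D" and "H \<subseteq> D" and "H' \<subseteq> D" and "card H = card H'"
  obtains \<sigma> where "\<sigma> permutes D" and "\<sigma> ` H = H'"
proof -
  have fin: "finite H" "finite H'"
    using assms(1-3) finite_subset by auto
  obtain f where f: "bij_betw f H H'"
    using finite_same_card_bij[OF fin assms(4)] by blast
  have "card (D - H) = card (D - H')"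
    using assms fin by (simp add: card_Diff_subset)
  then obtain g where g: "bij_betw g (D - H) (D - H')"
    using finite_same_card_bij[OF finite_Diff[OF assms(1)] finite_Diff[OF assms(1)]] by blast
  define \<sigma> where "\<sigma> x = (if x \<in> H then f x else if x \<in> D then g x else x)" for x
  have "bij_betw (\<lambda>x. if x \<in> H then f x else g x) (H \<union> (D - H)) (H' \<union> (D - H'))"
    by (rule bij_betw_disjoint_Un[OF f g]) auto
  also have "H \<union> (D - H) = D"
    using assms(2) by auto
  also have "H' \<union> (D - H') = D"
    using assms(3) by auto
  finally have "bij_betw (\<lambda>x. if x \<in> H then f x else g x) D D" .
  then have "bij_betw \<sigma> D D"
    by (rule bij_betw_cong[THEN iffD1, rotated]) (auto simp: \<sigma>_def)
  then have "\<sigma> permutes D"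
    by (rule bij_imp_permutes) (use assms(2) in \<open>auto simp: \<sigma>_def\<close>)
  moreover have "\<sigma> ` H = H'"
    using f by (auto simp: \<sigma>_def bij_betw_def)
  ultimately show thesis by (rule that)
qed

lemma card_subsets_sum_permutes_image:
  fixes g :: "'a set \<Rightarrow> real"
  assumes "finite D" and "H0 \<subseteq> D" and "card H0 = k"
  shows "card {H. H \<subseteq> D \<and> card H = k} * (\<Sum>\<sigma> | \<sigma> permutes D. g (\<sigma> ` H0))
       = fact (card D) * (\<Sum>H | H \<subseteq> D \<and> card H = k. g H)"
proof -
  define Hs where "Hs = {H. H \<subseteq> D \<and> card H = k}"
  define Ps where "Ps = {\<sigma>. \<sigma> permutes D}"
  have orbit: "(\<Sum>\<sigma>\<in>Ps. g (\<sigma> ` H)) = (\<Sum>\<sigma>\<in>Ps. g (\<sigma> ` H0))" if "H \<in> Hs" for H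
  proof -
    have "H \<subseteq> D" "card H0 = card H"
      using that assms(3) by (auto simp: Hs_def)
    then obtain \<tau> where \<tau>: "\<tau> permutes D" "\<tau> ` H0 = H"
      by (rule exists_permutes_image_eq[OF assms(1,2)])
    have "(\<Sum>\<sigma>\<in>Ps. g (\<sigma> ` H0)) = (\<Sum>\<sigma>\<in>Ps. g ((\<sigma> \<circ> \<tau>) ` H0))"
      unfolding Ps_def by (rule sum_permutations_compose_right[OF \<tau>(1)])
    also have "\<dots> = (\<Sum>\<sigma>\<in>Ps. g (\<sigma> ` H))"
      by (simp add: image_image flip: \<tau>(2))
    finally show ?thesis by simp
  qed
  have invariant: "(\<Sum>H\<in>Hs. g (\<sigma> ` H)) = (\<Sum>H\<in>Hs. g H)" if "\<sigma> \<in> Ps" for \<sigma>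
  proof -
    have \<sigma>: "\<sigma> permutes D" and \<sigma>': "inv \<sigma> permutes D"
      using that permutes_inv by (auto simp: Ps_def)
    have "bij_betw ((`) \<sigma>) Hs Hs"
    proof (rule bij_betwI[where g = "(`) (inv \<sigma>)"])
      show "(`) \<sigma> \<in> Hs \<rightarrow> Hs" "(`) (inv \<sigma>) \<in> Hs \<rightarrow> Hs"
        using \<sigma> \<sigma>' by (auto simp: Hs_def permutes_in_image card_image permutes_inj_on)
    qed (auto simp: image_image permutes_inverses[OF \<sigma>])
    then show ?thesis
      by (rule sum.reindex_bij_betw)
  qed
  have "card Hs * (\<Sum>\<sigma>\<in>Ps. g (\<sigma> ` H0)) = (\<Sum>H\<in>Hs. \<Sum>\<sigma>\<in>Ps. g (\<sigma> ` H))"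
    using orbit by simp
  also have "\<dots> = (\<Sum>\<sigma>\<in>Ps. \<Sum>H\<in>Hs. g (\<sigma> ` H))"
    by (rule sum.swap)
  also have "\<dots> = card Ps * (\<Sum>H\<in>Hs. g H)"
    using invariant by simp
  also have "card Ps = fact (card D)"
    unfolding Ps_def using assms(1) by (rule card_permutations[OF refl])
  finally show ?thesis
    by (simp add: Hs_def Ps_def)
qed

lemma odd_image_Int_even_image: "(\<lambda>i::nat. 2 * i + 1) ` A \<inter> (\<lambda>i. 2 * i + 2) ` B = {}"
  by auto presburger

definition pair_choice :: "nat \<Rightarrow> nat set \<Rightarrow> nat set" where
  "pair_choice n C = (\<lambda>i. 2 * i + 1) ` C \<union> (\<lambda>i. 2 * i + 2) ` ({..<n} - C)"

lemma sum_pair_choice: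
  assumes "C \<subseteq> {..<n}"
  shows "(\<Sum>x\<in>pair_choice n C. b x) = (\<Sum>i\<in>C. b (2 * i + 1)) + (\<Sum>i\<in>{..<n} - C. b (2 * i + 2))"
proof -
  have "finite C"
    using assms finite_subset by blast
  moreover note odd_image_Int_even_image[of C "{..<n} - C"]
  ultimately show ?thesis
    unfolding pair_choice_def
    by (simp add: sum.union_disjoint sum.reindex inj_on_def)
qed

lemma pair_choice_half_subset:
  assumes "C \<subseteq> {..<n}"
  shows "pair_choice n C \<subseteq> {1..2 * n}" and "card (pair_choice n C) = n"
proof -
  show "pair_choice n C \<subseteq> {1..2 * n}"
    using assms by (auto simp: pair_choice_def)
  have "finite C"
    using assms finite_subset by blast
  moreover note odd_image_Int_even_image[of C "{..<n} - C"]
  ultimately have "card (pair_choice n C) = card C + card ({..<n} - C)"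
    unfolding pair_choice_def
    by (simp add: card_Un_disjoint card_image inj_on_def)
  then show "card (pair_choice n C) = n"
    using card_mono[OF finite_lessThan assms] by (simp add: card_Diff_subset[OF \<open>finite C\<close> assms])
qed

lemma sum_atLeastAtMost_pairs:
  fixes f :: "nat \<Rightarrow> 'a::comm_monoid_add"
  shows "(\<Sum>i<n. f (2 * i + 1) + f (2 * i + 2)) = (\<Sum>x\<in>{1..2 * n}. f x)"
proof (induction n)
  case (Suc n)
  have "{1..2 * Suc n} = insert (2 * n + 2) (insert (2 * n + 1) {1..2 * n})"
    by auto
  with Suc show ?case
    by (simp add: ac_simps)
qed simp

lemma sum_pair_choice_exp_le:
  fixes b :: "nat \<Rightarrow> real" and t c :: real
  assumes "t \<ge> 0" and "\<And>x x'. x \<in> {1..2 * n} \<Longrightarrow> x' \<in> {1..2 * n} \<Longrightarrow> \<bar>b x - b x'\<bar> \<le> c"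
  shows "(\<Sum>C\<in>Pow {..<n}. exp (t * (\<Sum>x\<in>pair_choice n C. b x)))
         \<le> 2 ^ n * exp (t * (\<Sum>x\<in>{1..2 * n}. b x) / 2 + n * t\<^sup>2 * c\<^sup>2 / 8)"
proof -
  have "(\<Sum>C\<in>Pow {..<n}. exp (t * (\<Sum>x\<in>pair_choice n C. b x)))
      = (\<Sum>C\<in>Pow {..<n}. exp (t * ((\<Sum>i\<in>C. b (2 * i + 1)) + (\<Sum>i\<in>{..<n} - C. b (2 * i + 2)))))"
    by (intro sum.cong refl) (simp add: sum_pair_choice)
  also have "\<dots> \<le> 2 ^ card {..<n} * exp (t * (\<Sum>i<n. b (2 * i + 1) + b (2 * i + 2)) / 2
                     + card {..<n} * t\<^sup>2 * c\<^sup>2 / 8)"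
    by (rule sum_Pow_exp_choice_le) (use assms in auto)
  also have "(\<Sum>i<n. b (2 * i + 1) + b (2 * i + 2)) = (\<Sum>x\<in>{1..2 * n}. b x)"
    by (rule sum_atLeastAtMost_pairs)
  finally show ?thesis
    by simp
qed

lemma sum_half_subsets_exp_le:
  fixes a :: "nat \<Rightarrow> real" and t c :: real
  assumes "t \<ge> 0" and diff: "\<And>x x'. x \<in> {1..2 * n} \<Longrightarrow> x' \<in> {1..2 * n} \<Longrightarrow> \<bar>a x - a x'\<bar> \<le> c"
  shows "(\<Sum>H | H \<subseteq> {1..2 * n} \<and> card H = n. exp (t * (\<Sum>x\<in>H. a x)))
         \<le> card {H. H \<subseteq> {1..2 * n} \<and> card H = n}
             * exp (t * (\<Sum>x\<in>{1..2 * n}. a x) / 2 + n * t\<^sup>2 * c\<^sup>2 / 8)"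
proof -
  define D where "D = {1..2 * n}"
  define N where "N = card {H. H \<subseteq> D \<and> card H = n}"
  define g where "g H = exp (t * (\<Sum>x\<in>H. a x))" for H
  define S where "S = (\<Sum>H | H \<subseteq> D \<and> card H = n. g H)"
  define M where "M = exp (t * (\<Sum>x\<in>D. a x) / 2 + n * t\<^sup>2 * c\<^sup>2 / 8)"
  have orbit_sum: "N * (\<Sum>\<sigma> | \<sigma> permutes D. g (\<sigma> ` pair_choice n C)) = fact (2 * n) * S"
    if "C \<in> Pow {..<n}" for C
    using card_subsets_sum_permutes_image[of D "pair_choice n C" n g] pair_choice_half_subset[of C n] that
    by (simp add: N_def S_def D_def)
  have per_permutation: "(\<Sum>C\<in>Pow {..<n}. g (\<sigma> ` pair_choice n C)) \<le> 2 ^ n * M"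
    if \<sigma>: "\<sigma> permutes D" for \<sigma>
  proof -
    have "(\<Sum>C\<in>Pow {..<n}. g (\<sigma> ` pair_choice n C))
        = (\<Sum>C\<in>Pow {..<n}. exp (t * (\<Sum>x\<in>pair_choice n C. a (\<sigma> x))))"
      by (simp add: g_def sum.reindex permutes_inj_on[OF \<sigma>])
    also have "\<dots> \<le> 2 ^ n * exp (t * (\<Sum>x\<in>D. a (\<sigma> x)) / 2 + n * t\<^sup>2 * c\<^sup>2 / 8)"
      unfolding D_def using assms(1)
      by (rule sum_pair_choice_exp_le) (use diff permutes_in_image[OF \<sigma>] in \<open>auto simp: D_def\<close>)
    also have "(\<Sum>x\<in>D. a (\<sigma> x)) = (\<Sum>x\<in>D. a x)"
      using sum.permute[OF \<sigma>, of a] by (simp add: comp_def)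
    finally show ?thesis
      by (simp add: M_def)
  qed
  have "2 ^ n * (fact (2 * n) * S) = (\<Sum>C\<in>Pow {..<n}. N * (\<Sum>\<sigma> | \<sigma> permutes D. g (\<sigma> ` pair_choice n C)))"
    using orbit_sum by (simp add: card_Pow)
  also have "\<dots> = N * (\<Sum>\<sigma> | \<sigma> permutes D. \<Sum>C\<in>Pow {..<n}. g (\<sigma> ` pair_choice n C))"
    by (simp add: sum_distrib_left sum.swap[of _ "Pow {..<n}"])
  also have "\<dots> \<le> N * (\<Sum>\<sigma> | \<sigma> permutes D. 2 ^ n * M)"
    using per_permutation by (intro mult_left_mono sum_mono) auto
  also have "\<dots> = 2 ^ n * (fact (2 * n) * (N * M))"
    by (simp add: card_permutations D_def)
  finally have "S \<le> N * M"
    by simp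
  then show ?thesis
    by (simp add: S_def N_def M_def g_def D_def)
qed

lemma finite_subsets_card: "finite D \<Longrightarrow> finite {H. H \<subseteq> D \<and> card H = k}"
  by (rule finite_subset[of _ "Pow D"]) auto

lemma half_subsets_nonempty: "{H. H \<subseteq> {1..2 * n} \<and> card H = n} \<noteq> {}"
  by (auto intro!: exI[of _ "{1..n}"])

lemma half_subset_sum_upper_tail:
  fixes a :: "nat \<Rightarrow> real" and c s :: real
  assumes "n > 0" and "c > 0" and "s \<ge> 0"
    and diff: "\<And>x x'. x \<in> {1..2 * n} \<Longrightarrow> x' \<in> {1..2 * n} \<Longrightarrow> \<bar>a x - a x'\<bar> \<le> c"
  shows "measure_pmf.prob (pmf_of_set {H. H \<subseteq> {1..2 * n} \<and> card H = n})
           {H. (\<Sum>x\<in>H. a x) \<ge> (\<Sum>x\<in>{1..2 * n}. a x) / 2 + s}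
         \<le> exp (- 2 * s\<^sup>2 / (n * c\<^sup>2))"
proof -
  define Hs where "Hs = {H. H \<subseteq> {1..2 * n} \<and> card H = n}"
  define A where "A = (\<Sum>x\<in>{1..2 * n}. a x)"
  define X where "X = {H. (\<Sum>x\<in>H. a x) \<ge> A / 2 + s}"
  define t where "t = 4 * s / (n * c\<^sup>2)"
  have "t \<ge> 0"
    using assms(3) by (simp add: t_def)
  have "finite Hs" and "Hs \<noteq> {}"
    using finite_subsets_card half_subsets_nonempty by (auto simp: Hs_def)
  then have "card Hs > 0"
    by (auto simp: card_gt_0_iff)
  have "real (card (Hs \<inter> X)) \<le> (\<Sum>H\<in>Hs \<inter> X. exp (t * ((\<Sum>x\<in>H. a x) - A / 2 - s)))"
    using \<open>t \<ge> 0\<close> by (intro sum_bounded_below[where K = 1, simplified]) (auto simp: X_def)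
  also have "\<dots> \<le> (\<Sum>H\<in>Hs. exp (t * ((\<Sum>x\<in>H. a x) - A / 2 - s)))"
    using \<open>finite Hs\<close> by (intro sum_mono2) auto
  also have "\<dots> = (\<Sum>H\<in>Hs. exp (t * (\<Sum>x\<in>H. a x))) * exp (- t * (A / 2 + s))"
    by (simp add: sum_distrib_right algebra_simps flip: exp_add)
  also have "\<dots> \<le> card Hs * exp (t * A / 2 + n * t\<^sup>2 * c\<^sup>2 / 8) * exp (- t * (A / 2 + s))"
    using sum_half_subsets_exp_le[OF \<open>t \<ge> 0\<close> diff] by (simp add: Hs_def A_def)
  also have "\<dots> = card Hs * exp (n * t\<^sup>2 * c\<^sup>2 / 8 - t * s)"
    by (simp add: mult.assoc algebra_simps flip: exp_add)
  also have "n * t\<^sup>2 * c\<^sup>2 / 8 - t * s = - 2 * s\<^sup>2 / (n * c\<^sup>2)"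
    using assms(1,2) by (simp add: t_def field_simps power2_eq_square)
  finally have "card (Hs \<inter> X) / card Hs \<le> exp (- 2 * s\<^sup>2 / (n * c\<^sup>2))"
    using \<open>card Hs > 0\<close> by (simp add: divide_le_eq mult.commute)
  moreover have "measure_pmf.prob (pmf_of_set Hs) X = card (Hs \<inter> X) / card Hs"
    by (rule measure_pmf_of_set[OF \<open>Hs \<noteq> {}\<close> \<open>finite Hs\<close>])
  ultimately show ?thesis
    by (simp add: Hs_def X_def A_def)
qed

lemma half_subset_sum_deviation_prob_le:
  fixes a :: "nat \<Rightarrow> real" and c s :: real
  assumes "n > 0" and "c > 0" and "s \<ge> 0"
    and diff: "\<And>x x'. x \<in> {1..2 * n} \<Longrightarrow> x' \<in> {1..2 * n} \<Longrightarrow> \<bar>a x - a x'\<bar> \<le> c"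
  shows "measure_pmf.prob (pmf_of_set {H. H \<subseteq> {1..2 * n} \<and> card H = n})
           {H. \<bar>(\<Sum>x\<in>H. a x) - (\<Sum>x\<in>{1..2 * n}. a x) / 2\<bar> \<ge> s}
         \<le> 2 * exp (- 2 * s\<^sup>2 / (n * c\<^sup>2))"
proof -
  let ?P = "measure_pmf.prob (pmf_of_set {H. H \<subseteq> {1..2 * n} \<and> card H = n})"
  let ?upper = "\<lambda>a. {H. (\<Sum>x\<in>H. a x) \<ge> (\<Sum>x\<in>{1..2 * n}. a x) / 2 + s}"
  have "{H. \<bar>(\<Sum>x\<in>H. a x) - (\<Sum>x\<in>{1..2 * n}. a x) / 2\<bar> \<ge> s} = ?upper a \<union> ?upper (\<lambda>x. - a x)"
    by (auto simp: sum_negf)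
  then have "?P {H. \<bar>(\<Sum>x\<in>H. a x) - (\<Sum>x\<in>{1..2 * n}. a x) / 2\<bar> \<ge> s}
      \<le> ?P (?upper a) + ?P (?upper (\<lambda>x. - a x))"
    by (simp add: measure_Un_le)
  also have "\<dots> \<le> exp (- 2 * s\<^sup>2 / (n * c\<^sup>2)) + exp (- 2 * s\<^sup>2 / (n * c\<^sup>2))"
    using diff by (intro add_mono half_subset_sum_upper_tail[OF assms(1-3)]) (auto simp: abs_minus_commute)
  finally show ?thesis
    by simp
qed

lemma prob_out_eq_average:
  assumes "finite H" and "H \<noteq> {}"
  shows "prob_out R H y = (\<Sum>x\<in>H. pmf (R x) y) / card H"
  unfolding prob_out_def measure_pmf_single pmf_bind
  using integral_pmf_of_set[OF assms(2,1)] by simp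

lemma eps_private_pmf_diff_le:
  assumes priv: "eps_private \<epsilon> d R" and "x \<in> {1..d}" and "x' \<in> {1..d}"
  shows "\<bar>pmf (R x) y - pmf (R x') y\<bar> \<le> (exp (2 * \<epsilon>) - 1) * prob_out R {1..d} y"
proof -
  define k where "k = exp \<epsilon>"
  define P where "P = prob_out R {1..d} y"
  have ratio: "pmf (R z) y \<le> k * pmf (R z') y" if "z \<in> {1..d}" "z' \<in> {1..d}" for z z'
    using priv that unfolding eps_private_def k_def by (metis measure_pmf_single)
  have "measure_pmf.prob (R x) UNIV \<le> k * measure_pmf.prob (R x) UNIV"
    using priv \<open>x \<in> {1..d}\<close> unfolding eps_private_def k_def by blast
  then have "1 \<le> k"
    by simp
  have "d > 0"
    using \<open>x \<in> {1..d}\<close> by simp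
  have P: "P = (\<Sum>z\<in>{1..d}. pmf (R z) y) / d"
    using \<open>d > 0\<close> by (simp add: P_def prob_out_eq_average)
  have upper: "pmf (R z) y \<le> k * P" if "z \<in> {1..d}" for z
  proof -
    have "(\<Sum>_\<in>{1..d}. pmf (R z) y) \<le> (\<Sum>z'\<in>{1..d}. k * pmf (R z') y)"
      using ratio that by (intro sum_mono) auto
    then show ?thesis
      using \<open>d > 0\<close> by (simp add: P field_simps sum_distrib_left)
  qed
  have lower: "P \<le> k * pmf (R z) y" if "z \<in> {1..d}" for z
  proof -
    have "(\<Sum>z'\<in>{1..d}. pmf (R z') y) \<le> (\<Sum>_\<in>{1..d}. k * pmf (R z) y)"
      using ratio that by (intro sum_mono) auto
    then show ?thesis
      using \<open>d > 0\<close> by (simp add: P field_simps)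
  qed
  have "P \<ge> 0"
    by (simp add: P_def prob_out_def)
  have "pmf (R z) y - pmf (R z') y \<le> (k\<^sup>2 - 1) * P" if "z \<in> {1..d}" "z' \<in> {1..d}" for z z'
  proof -
    have "k * pmf (R z) y \<le> k * (k * P)"
      using upper[OF that(1)] \<open>1 \<le> k\<close> by (intro mult_left_mono) auto
    then have "k * (pmf (R z) y - pmf (R z') y) \<le> k * (k * P) - P"
      using lower[OF that(2)] by (simp add: algebra_simps)
    also have "\<dots> \<le> k * ((k\<^sup>2 - 1) * P)"
    proof -
      have "0 \<le> P * ((k - 1)\<^sup>2 * (k + 1))"
        using \<open>1 \<le> k\<close> \<open>P \<ge> 0\<close> by simp
      then show ?thesis
        by (simp add: algebra_simps power2_eq_square)
    qed
    finally show ?thesis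
      using \<open>1 \<le> k\<close> by simp
  qed
  moreover have "k\<^sup>2 = exp (2 * \<epsilon>)"
    by (simp add: k_def power2_eq_square flip: exp_add)
  ultimately show ?thesis
    using assms(2,3) by (auto simp: abs_le_iff P_def)
qed

lemma abs_ln_le_of_abs_diff_le:
  fixes r \<tau> :: real
  assumes "\<bar>r - 1\<bar> \<le> \<tau>" and "\<tau> \<le> 1/2"
  shows "r > 0" and "\<bar>ln r\<bar> \<le> 2 * \<tau>"
proof -
  show "r > 0"
    using assms by linarith
  have "ln r \<le> r - 1"
    using \<open>r > 0\<close> by (rule ln_le_minus_one)
  moreover have "- ln r \<le> 1 / r - 1"
    using ln_le_minus_one[of "1 / r"] \<open>r > 0\<close> by (simp add: ln_div)
  moreover have "1 / r - 1 \<le> 2 * \<tau>"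
  proof (cases "r \<le> 1")
    case True
    have "(1 - r) * (1 / r) \<le> \<tau> * 2"
      using assms True \<open>r > 0\<close> by (intro mult_mono) (auto simp: field_simps)
    then show ?thesis
      using \<open>r > 0\<close> by (simp add: field_simps)
  next
    case False
    then have "1 / r \<le> 1"
      by simp
    moreover have "0 \<le> \<tau>"
      using assms(1) by linarith
    ultimately show ?thesis
      by linarith
  qed
  ultimately show "\<bar>ln r\<bar> \<le> 2 * \<tau>"
    using assms by linarith
qed

lemma not_leaky_if_half_sum_close:
  assumes "H \<subseteq> {1..2 * n}" and "card H = n" and "n > 0" and "\<tau> \<le> 1/2"
    and close: "\<bar>(\<Sum>x\<in>H. pmf (R x) y) - (\<Sum>x\<in>{1..2 * n}. pmf (R x) y) / 2\<bar>
                  \<le> \<tau> * ((\<Sum>x\<in>{1..2 * n}. pmf (R x) y) / 2)"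
  shows "\<not> leaky (2 * \<tau>) (2 * n) H R y"
proof (cases "prob_out R {1..2 * n} y = 0")
  case True
  then show ?thesis
    by (simp add: leaky_def)
next
  case False
  define S where "S = (\<Sum>x\<in>{1..2 * n}. pmf (R x) y)"
  define T where "T = (\<Sum>x\<in>H. pmf (R x) y)"
  have "finite H" and "H \<noteq> {}"
    using assms(1-3) finite_subset by auto
  then have H: "prob_out R H y = T / n"
    using \<open>card H = n\<close> by (simp add: prob_out_eq_average T_def)
  have all: "prob_out R {1..2 * n} y = S / (2 * n)"
    using \<open>n > 0\<close> by (simp add: prob_out_eq_average S_def)
  have "S \<ge> 0"
    by (simp add: S_def sum_nonneg)
  moreover have "S \<noteq> 0"
    using False unfolding all by simp
  ultimately have "S > 0"
    by simp
  have ratio: "prob_out R H y / prob_out R {1..2 * n} y = T / (S / 2)"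
    unfolding H all using \<open>n > 0\<close> \<open>S > 0\<close> by simp
  have "T / (S / 2) - 1 = (T - S / 2) / (S / 2)"
    using \<open>S > 0\<close> by (simp add: diff_divide_distrib)
  then have "\<bar>T / (S / 2) - 1\<bar> = \<bar>T - S / 2\<bar> / (S / 2)"
    using \<open>S > 0\<close> by (simp only: abs_divide abs_of_pos half_gt_zero)
  also have "\<dots> \<le> \<tau>"
    using close \<open>S > 0\<close> unfolding T_def[symmetric] S_def[symmetric]
    by (simp only: pos_divide_le_eq half_gt_zero)
  finally have "\<bar>T / (S / 2) - 1\<bar> \<le> \<tau>" .
  from abs_ln_le_of_abs_diff_le[OF this \<open>\<tau> \<le> 1/2\<close>]
  have "prob_out R H y / prob_out R {1..2 * n} y > 0"
    and "\<bar>ln (prob_out R H y / prob_out R {1..2 * n} y)\<bar> \<le> 2 * \<tau>"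
    by (simp_all only: ratio)
  then show ?thesis
    by (auto simp: leaky_def)
qed

lemma eps_private_deviation_prob_le:
  fixes \<epsilon> \<tau> :: real and R :: "nat \<Rightarrow> 'y::countable pmf"
  assumes "\<epsilon> > 0" and "n > 0" and "\<tau> \<ge> 0" and priv: "eps_private \<epsilon> (2 * n) R"
    and S: "S = (\<Sum>x\<in>{1..2 * n}. pmf (R x) y)" and "S > 0"
  shows "measure_pmf.prob (pmf_of_set {H. H \<subseteq> {1..2 * n} \<and> card H = n})
           {H. \<bar>(\<Sum>x\<in>H. pmf (R x) y) - S / 2\<bar> \<ge> \<tau> * (S / 2)}
         \<le> 2 * exp (- 2 * real n * \<tau>\<^sup>2 / (exp (2 * \<epsilon>) - 1)\<^sup>2)"
proof -
  define K where "K = exp (2 * \<epsilon>) - 1"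
  define c where "c = K * (S / (2 * n))"
  have "K > 0"
    using assms(1) by (simp add: K_def)
  then have "c > 0"
    using \<open>n > 0\<close> \<open>S > 0\<close> by (simp add: c_def)
  have avg: "prob_out R {1..2 * n} y = S / (2 * n)"
    using \<open>n > 0\<close> by (simp add: prob_out_eq_average S)
  have diff: "\<bar>pmf (R x) y - pmf (R x') y\<bar> \<le> c" if "x \<in> {1..2 * n}" "x' \<in> {1..2 * n}" for x x'
    using eps_private_pmf_diff_le[OF priv that, of y] unfolding avg c_def K_def .
  have "- 2 * (\<tau> * (S / 2))\<^sup>2 / (n * c\<^sup>2) = - 2 * real n * \<tau>\<^sup>2 / K\<^sup>2"
    using \<open>n > 0\<close> \<open>S > 0\<close> \<open>K > 0\<close> unfolding c_def
    by (simp add: power_mult_distrib power_divide field_simps power2_eq_square)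
  then show ?thesis
    using half_subset_sum_deviation_prob_le[OF \<open>n > 0\<close> \<open>c > 0\<close>, of "\<tau> * (S / 2)" "\<lambda>x. pmf (R x) y"]
      diff \<open>\<tau> \<ge> 0\<close> \<open>S > 0\<close> by (simp add: S K_def)
qed

lemma prob_not_leaky_ge:
  fixes \<epsilon> v :: real and R :: "nat \<Rightarrow> 'y::countable pmf"
  assumes "\<epsilon> > 0" and "even d" and "d > 0" and "0 \<le> v" and "v \<le> 1" and priv: "eps_private \<epsilon> d R"
  shows "measure_pmf.prob (pmf_of_set {H. H \<subseteq> {1..d} \<and> card H = d div 2}) {H. \<not> leaky v d H R y}
         \<ge> 1 - 2 * exp (- d * v\<^sup>2 / (4 * (exp (2 * \<epsilon>) - 1)\<^sup>2))"
proof -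
  obtain n where d: "d = 2 * n"
    using \<open>even d\<close> by blast
  with \<open>d > 0\<close> have "n > 0"
    by simp
  define Hs where "Hs = {H. H \<subseteq> {1..2 * n} \<and> card H = n}"
  define S where "S = (\<Sum>x\<in>{1..2 * n}. pmf (R x) y)"
  define Dev where "Dev = {H. \<bar>(\<Sum>x\<in>H. pmf (R x) y) - S / 2\<bar> \<ge> v / 2 * (S / 2)}"
  define Good where "Good = {H. \<not> leaky v d H R y}"
  have "S \<ge> 0"
    by (simp add: S_def sum_nonneg)
  show ?thesis
  proof (cases "S = 0")
    case True
    then have "prob_out R {1..d} y = 0"
      using \<open>n > 0\<close> by (simp add: prob_out_eq_average d S_def)
    then have "Good = UNIV"
      by (simp add: Good_def leaky_def)
    then show ?thesis
      by (simp add: Good_def)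
  next
    case False
    let ?P = "measure_pmf.prob (pmf_of_set Hs)"
    have "set_pmf (pmf_of_set Hs) = Hs"
      using half_subsets_nonempty finite_subsets_card by (simp add: Hs_def)
    then have "?P (UNIV - Dev) \<le> ?P Good"
      using not_leaky_if_half_sum_close[of _ n "v / 2" R y] \<open>v \<le> 1\<close> \<open>n > 0\<close>
      by (intro measure_pmf.finite_measure_mono_AE)
        (auto simp: AE_measure_pmf_iff Hs_def Dev_def Good_def S_def d)
    have "?P Dev \<le> 2 * exp (- 2 * real n * (v / 2)\<^sup>2 / (exp (2 * \<epsilon>) - 1)\<^sup>2)"
      unfolding Hs_def Dev_def
      by (rule eps_private_deviation_prob_le[OF \<open>\<epsilon> > 0\<close> \<open>n > 0\<close> _ priv[unfolded d] S_def])
        (use False \<open>S \<ge> 0\<close> \<open>v \<ge> 0\<close> in auto)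
    also have "- 2 * real n * (v / 2)\<^sup>2 / (exp (2 * \<epsilon>) - 1)\<^sup>2 = - d * v\<^sup>2 / (4 * (exp (2 * \<epsilon>) - 1)\<^sup>2)"
      by (simp add: d power_divide)
    finally have "1 - 2 * exp (- d * v\<^sup>2 / (4 * (exp (2 * \<epsilon>) - 1)\<^sup>2)) \<le> ?P (UNIV - Dev)"
      using measure_pmf.prob_compl[of Dev "pmf_of_set Hs"] by simp
    also note \<open>?P (UNIV - Dev) \<le> ?P Good\<close>
    finally show ?thesis
      by (simp add: Hs_def Good_def d)
  qed
qed

theorem mainTheorem4:
  fixes \<epsilon> \<beta> :: real and d :: nat and R :: "nat \<Rightarrow> 'y::countable pmf" and y :: 'y
  assumes "\<epsilon> > 0" and "0 < \<beta>" and "\<beta> < 1"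
    and "even d"
    and "real d > 4 * (exp (2 * \<epsilon>) - 1)^2 * ln (2 / \<beta>)"
    and "eps_private \<epsilon> d R"
  shows "measure_pmf.prob (pmf_of_set {H. H \<subseteq> {1..d} \<and> card H = d div 2})
           {H. \<not> leaky ((exp (2 * \<epsilon>) - 1) * sqrt (4 / real d * ln (2 / \<beta>))) d H R y}
         \<ge> 1 - \<beta>"
proof -
  define K where "K = exp (2 * \<epsilon>) - 1"
  define L where "L = ln (2 / \<beta>)"
  define v where "v = K * sqrt (4 / real d * L)"
  have "K > 0" and "L > 0"
    using assms(1-3) by (simp_all add: K_def L_def)
  then have "d > 0"
    using assms(5) unfolding K_def[symmetric] L_def[symmetric]
    by (smt (verit) mult_pos_pos of_nat_0_less_iff zero_less_power)
  have v2: "v\<^sup>2 = 4 * K\<^sup>2 * L / d"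
    using \<open>L > 0\<close> by (simp add: v_def power_mult_distrib)
  have "v \<ge> 0"
    using \<open>K > 0\<close> \<open>L > 0\<close> by (simp add: v_def)
  moreover have "v \<le> 1"
  proof -
    have "v\<^sup>2 < 1"
      using assms(5) \<open>d > 0\<close> by (simp add: v2 K_def L_def)
    then show ?thesis
      using \<open>v \<ge> 0\<close> by (simp add: power_less_one_iff abs_square_less_1)
  qed
  moreover have "2 * exp (- d * v\<^sup>2 / (4 * K\<^sup>2)) = \<beta>"
    using \<open>d > 0\<close> \<open>K > 0\<close> assms(2) by (simp add: v2 L_def exp_minus)
  ultimately show ?thesis
    using prob_not_leaky_ge[OF assms(1,4) \<open>d > 0\<close> _ _ assms(6), of v y]
    by (simp add: v_def K_def L_def)
qed

end
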